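(* Let $n\ge3$ and consider the path graph on $n$ nodes with Laplacian $L_n$. The path is reachable (observable) from a node $i\in\{2,\dots,n-1\}$ if and only if the matrices $N_{i-1}$ and $N_{n-i}$ have no common eigenvalue. Moreover, the eigenvalues common to these two matrices are exactly the unreachable (unobservable) eigenvalues of $L_n$ from node $i$.
   Context: The path graph on nodes $\{1,\dots,n\}$ has edges $\{i,i+1\}$; $L_n$ is tridiagonal with diagonal $(1,2,\dots,2,1)$ and off-diagonal $-1$. Reachable from node $i$ means the pair $(L_n,e_i)$ is reachable; observable means $(L_n,e_i^T)$ is observable. An unreachable (unobservable) eigenvalue from node $i$ is $\lambda$ such that some $v\ne0$ satisfies $L_nv=\lambda v$ and $(v)_i=0$. For $\nu\ge1$, $N_\nu\in\mathbb{R}^{\nu\times\nu}$ is the tridiagonal matrix with diagonal $(1,2,\dots,2)$ and off-diagonal entries $-1$. *)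

theory Defs
  imports "Jordan_Normal_Form.DL_Rank" "Jordan_Normal_Form.Char_Poly"
begin

text \<open>Nodes of the path are 1,...,n; JNF indices are 0-based, so node k is index k-1.\<close>

definition path_laplacian :: "nat \<Rightarrow> real mat" where
  "path_laplacian n = mat n n (\<lambda>(r, c).
     if r = c then (if r = 0 \<or> r = n - 1 then 1 else 2)
     else if r = c + 1 \<or> c = r + 1 then -1 else 0)"

definition N_mat :: "nat \<Rightarrow> real mat" where
  "N_mat \<nu> = mat \<nu> \<nu> (\<lambda>(r, c).
     if r = c then (if r = 0 then 1 else 2)
     else if r = c + 1 \<or> c = r + 1 then -1 else 0)"

definition reach_matrix :: "'a::field mat \<Rightarrow> 'a vec \<Rightarrow> 'a mat" where
  "reach_matrix A b = mat (dim_row A) (dim_row A) (\<lambda>(r, k). ((A ^\<^sub>m k) *\<^sub>v b) $ r)"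

definition obs_matrix :: "'a::field mat \<Rightarrow> 'a vec \<Rightarrow> 'a mat" where
  "obs_matrix A c = mat (dim_row A) (dim_row A) (\<lambda>(k, j). (transpose_mat (A ^\<^sub>m k) *\<^sub>v c) $ j)"

definition reachable :: "'a::field mat \<Rightarrow> 'a vec \<Rightarrow> bool" where
  "reachable A b = (vec_space.rank (dim_row A) (reach_matrix A b) = dim_row A)"

text \<open>observable A c: the pair (A, c^T) is observable (c given as a column vector).\<close>
definition observable :: "'a::field mat \<Rightarrow> 'a vec \<Rightarrow> bool" where
  "observable A c = (vec_space.rank (dim_row A) (obs_matrix A c) = dim_row A)"

text \<open>Unreachable (= unobservable) eigenvalue of L_n from node i (1-based).\<close>
definition unreachable_eigenvalue :: "nat \<Rightarrow> nat \<Rightarrow> real \<Rightarrow> bool" where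
  "unreachable_eigenvalue n i mu =
     (\<exists>v. v \<in> carrier_vec n \<and> v \<noteq> 0\<^sub>v n \<and> path_laplacian n *\<^sub>v v = mu \<cdot>\<^sub>v v \<and> v $ (i - 1) = 0)"

end

theory Submission
  imports Defs
begin

text \<open>An eigenvector of \<open>L\<^sub>n\<close> vanishing at node \<open>i\<close> falls apart into the part left of \<open>i\<close>,
  an eigenvector of \<open>N\<^sub>i\<^sub>-\<^sub>1\<close>, and the part right of \<open>i\<close> read backwards from node \<open>n\<close>, an
  eigenvector of \<open>N\<^sub>n\<^sub>-\<^sub>i\<close>, for the same eigenvalue. Conversely two such eigenvectors glue to
  one of \<open>L\<^sub>n\<close> vanishing at \<open>i\<close> once they are scaled to satisfy the equation at node \<open>i\<close>;
  this is possible because an eigenvector of \<open>N\<^sub>\<nu>\<close> never vanishes in its last entry.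

  Reachability is then the Popov-Belevitch-Hautus test for a symmetric matrix: \<open>L\<^sub>n\<close> has the
  \<open>n\<close> distinct eigenvalues \<open>2 - 2 cos (j\<pi>/n)\<close>, so its Kalman matrix for \<open>e\<^sub>i\<close> is singular
  exactly when some eigenvector is orthogonal to \<open>e\<^sub>i\<close>. By symmetry the observability matrix is
  the transposed Kalman matrix.\<close>

section \<open>Tridiagonal matrices\<close>

definition tridiag :: "(nat \<Rightarrow> real) \<Rightarrow> nat \<Rightarrow> real mat" where
  "tridiag d m = mat m m (\<lambda>(r, c). if r = c then d r else if r = c + 1 \<or> c = r + 1 then -1 else 0)"

lemma path_laplacian_tridiag: "path_laplacian n = tridiag (\<lambda>r. if r = 0 \<or> r = n - 1 then 1 else 2) n"
  unfolding path_laplacian_def tridiag_def by simp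

lemma N_mat_tridiag: "N_mat m = tridiag (\<lambda>r. if r = 0 then 1 else 2) m"
  unfolding N_mat_def tridiag_def by simp

lemma tridiag_dim [simp]: "dim_row (tridiag d m) = m" "dim_col (tridiag d m) = m"
  unfolding tridiag_def by simp_all

lemma tridiag_carrier [simp]: "tridiag d m \<in> carrier_mat m m"
  by (rule carrier_matI) simp_all

lemma N_mat_carrier [simp]: "N_mat m \<in> carrier_mat m m"
  and N_mat_dim [simp]: "dim_row (N_mat m) = m" "dim_col (N_mat m) = m"
  unfolding N_mat_tridiag by simp_all

lemma path_laplacian_carrier: "path_laplacian n \<in> carrier_mat n n"
  unfolding path_laplacian_tridiag by simp

lemma transpose_path_laplacian: "transpose_mat (path_laplacian n) = path_laplacian n"
  by (rule eq_matI) (auto simp: path_laplacian_def)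

lemma tridiag_mult_vec_nth:
  assumes v: "v \<in> carrier_vec m" and r: "r < m"
  shows "(tridiag d m *\<^sub>v v) $ r =
    d r * v $ r - (if 0 < r then v $ (r - 1) else 0) - (if r + 1 < m then v $ (r + 1) else 0)"
proof -
  have "(tridiag d m *\<^sub>v v) $ r = (\<Sum>c<m. tridiag d m $$ (r, c) * v $ c)"
    using v r by (simp add: mult_mat_vec_def scalar_prod_def lessThan_atLeast0)
  also have "\<dots> = (\<Sum>c<m. (if c = r then d r * v $ c else 0)
      - (if c = r - 1 \<and> 0 < r then v $ c else 0) - (if c = r + 1 then v $ c else 0))"
    using r by (intro sum.cong) (auto simp: tridiag_def)
  also have "\<dots> = d r * v $ r - (if 0 < r then v $ (r - 1) else 0) - (if r + 1 < m then v $ (r + 1) else 0)"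
    using r by (simp add: sum_subtractf sum.If_cases)
  finally show ?thesis .
qed

lemma tridiag_eigen_iff:
  assumes "v \<in> carrier_vec m"
  shows "tridiag d m *\<^sub>v v = mu \<cdot>\<^sub>v v \<longleftrightarrow> (\<forall>r<m.
    d r * v $ r - (if 0 < r then v $ (r - 1) else 0) - (if r + 1 < m then v $ (r + 1) else 0) = mu * v $ r)"
proof -
  have "tridiag d m *\<^sub>v v = mu \<cdot>\<^sub>v v \<longleftrightarrow> (\<forall>r<m. (tridiag d m *\<^sub>v v) $ r = (mu \<cdot>\<^sub>v v) $ r)"
    using assms by (auto simp: vec_eq_iff simp del: index_mult_mat_vec)
  then show ?thesis
    using assms by (simp add: tridiag_mult_vec_nth del: index_mult_mat_vec)
qed

text \<open>Row \<open>r\<close> expresses \<open>v\<^sub>r\<^sub>-\<^sub>1\<close> through \<open>v\<^sub>r\<close> and \<open>v\<^sub>r\<^sub>+\<^sub>1\<close>, so a zero last entry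
  propagates backwards through the whole vector.\<close>
lemma tridiag_eigen_last_zero:
  assumes v: "v \<in> carrier_vec m" and ev: "tridiag d m *\<^sub>v v = mu \<cdot>\<^sub>v v" and last: "v $ (m - 1) = 0"
  shows "v = 0\<^sub>v m"
proof -
  have rows: "d r * v $ r - (if 0 < r then v $ (r - 1) else 0) - (if r + 1 < m then v $ (r + 1) else 0)
      = mu * v $ r" if "r < m" for r
    using ev that tridiag_eigen_iff[OF v] by blast
  have backwards: "v $ (m - 1 - k) = 0" if "k < m" for k
    using that
  proof (induction k rule: less_induct)
    case (less k)
    show ?case
    proof (cases k)
      case 0
      then show ?thesis using last by simp
    next
      case (Suc j)
      define r where "r = m - 1 - j"
      have "v $ r = 0"
        using less Suc unfolding r_def by auto
      moreover have "v $ (r + 1) = 0" if "r + 1 < m"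
      proof -
        have "0 < j" "r + 1 = m - 1 - (j - 1)"
          using that less.prems Suc unfolding r_def by auto
        then show ?thesis
          using less.IH[of "j - 1"] less.prems Suc by auto
      qed
      ultimately show ?thesis using rows[of r] less.prems Suc unfolding r_def by (auto split: if_splits)
    qed
  qed
  show ?thesis
  proof (rule eq_vecI)
    fix j assume "j < dim_vec (0\<^sub>v m :: real vec)"
    then show "v $ j = 0\<^sub>v m $ j"
      using backwards[of "m - 1 - j"] by simp
  qed (use v in simp)
qed

section \<open>Cutting the path at a node\<close>

text \<open>For \<open>u\<close> of length \<open>a\<close> and \<open>w\<close> of length \<open>b\<close> this is
  \<open>(u\<^sub>0, \<dots>, u\<^sub>a\<^sub>-\<^sub>1, 0, w\<^sub>b\<^sub>-\<^sub>1, \<dots>, w\<^sub>0)\<close>: the path cut at node \<open>a + 1\<close>, with the part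
  beyond the cut read from the far end of the path.\<close>
definition path_join :: "real vec \<Rightarrow> real vec \<Rightarrow> real vec" where
  "path_join u w = vec (dim_vec u + dim_vec w + 1) (\<lambda>r.
     if r < dim_vec u then u $ r else if r = dim_vec u then 0 else w $ (dim_vec u + dim_vec w - r))"

lemma path_join_carrier: "u \<in> carrier_vec a \<Longrightarrow> w \<in> carrier_vec b \<Longrightarrow> path_join u w \<in> carrier_vec (a + b + 1)"
  unfolding path_join_def by simp

lemma path_join_eigen_iff:
  assumes u: "u \<in> carrier_vec a" and w: "w \<in> carrier_vec b" and "0 < a" "0 < b"
  shows "path_laplacian (a + b + 1) *\<^sub>v path_join u w = mu \<cdot>\<^sub>v path_join u w \<longleftrightarrow>
    N_mat a *\<^sub>v u = mu \<cdot>\<^sub>v u \<and> N_mat b *\<^sub>v w = mu \<cdot>\<^sub>v w \<and> u $ (a - 1) + w $ (b - 1) = 0"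
proof -
  define n where "n = a + b + 1"
  define x where "x = path_join u w"
  define E where "E r \<longleftrightarrow> (if r = 0 \<or> r = n - 1 then 1 else 2) * x $ r - (if 0 < r then x $ (r - 1) else 0)
      - (if r + 1 < n then x $ (r + 1) else 0) = mu * x $ r" for r
  define U where "U r \<longleftrightarrow> (if r = 0 then 1 else 2) * u $ r - (if 0 < r then u $ (r - 1) else 0)
      - (if r + 1 < a then u $ (r + 1) else 0) = mu * u $ r" for r
  define W where "W t \<longleftrightarrow> (if t = 0 then 1 else 2) * w $ t - (if 0 < t then w $ (t - 1) else 0)
      - (if t + 1 < b then w $ (t + 1) else 0) = mu * w $ t" for t
  have x: "x $ r = (if r < a then u $ r else if r = a then 0 else w $ (a + b - r))" if "r < n" for r
    using that u w unfolding x_def n_def path_join_def by simp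
  have left: "E r \<longleftrightarrow> U r" if "r < a" for r
    using that \<open>0 < b\<close> unfolding E_def U_def by (simp add: x n_def less_imp_diff_less)
  have middle: "E a \<longleftrightarrow> u $ (a - 1) + w $ (b - 1) = 0"
    using \<open>0 < a\<close> \<open>0 < b\<close> unfolding E_def by (auto simp: x n_def)
  have right: "E (a + b - t) \<longleftrightarrow> W t" if "t < b" for t
  proof -
    define r where "r = a + b - t"
    have "\<not> r < a" "r \<noteq> a" "\<not> r - 1 < a" "\<not> r + 1 < a" "r + 1 \<noteq> a" "r < n" "0 < r"
      "r = n - 1 \<longleftrightarrow> t = 0" "r + 1 < n \<longleftrightarrow> 0 < t" "r - 1 = a \<longleftrightarrow> t + 1 = b"
      "a + b - r = t" "a + b - (r - 1) = t + 1" "0 < t \<Longrightarrow> a + b - (r + 1) = t - 1"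
      using that \<open>0 < a\<close> unfolding r_def n_def by auto
    then show ?thesis
      using that unfolding E_def W_def r_def[symmetric] by (simp add: x algebra_simps)
  qed
  have rows: "(\<forall>r<n. E r) \<longleftrightarrow> (\<forall>r<a. U r) \<and> (\<forall>t<b. W t) \<and> u $ (a - 1) + w $ (b - 1) = 0"
  proof
    assume "\<forall>r<n. E r"
    then show "(\<forall>r<a. U r) \<and> (\<forall>t<b. W t) \<and> u $ (a - 1) + w $ (b - 1) = 0"
      using left middle right unfolding n_def by auto
  next
    assume *: "(\<forall>r<a. U r) \<and> (\<forall>t<b. W t) \<and> u $ (a - 1) + w $ (b - 1) = 0"
    show "\<forall>r<n. E r"
    proof (intro allI impI)
      fix r assume "r < n"
      then consider "r < a" | "r = a" | "a + b - r < b" "a + b - (a + b - r) = r"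
        unfolding n_def by linarith
      then show "E r" using * left middle right[of "a + b - r"] by cases auto
    qed
  qed
  show ?thesis
    using rows path_join_carrier[OF u w]
    unfolding x_def n_def E_def U_def W_def path_laplacian_tridiag N_mat_tridiag
    by (simp add: tridiag_eigen_iff u w)
qed

lemma path_join_split:
  assumes v: "v \<in> carrier_vec (a + b + 1)" and "v $ a = 0"
  shows "v = path_join (vec a (\<lambda>r. v $ r)) (vec b (\<lambda>t. v $ (a + b - t)))"
  using assms by (intro eq_vecI) (auto simp: path_join_def)

lemma N_mat_eigen_zero_iff_last:
  assumes "u \<in> carrier_vec m" "0 < m" "N_mat m *\<^sub>v u = mu \<cdot>\<^sub>v u"
  shows "u = 0\<^sub>v m \<longleftrightarrow> u $ (m - 1) = 0"
  using assms tridiag_eigen_last_zero[of u m] by (auto simp: N_mat_tridiag)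

lemma unreachable_eigenvalue_iff_common_eigenvalue:
  assumes "0 < a" "0 < b"
  shows "unreachable_eigenvalue (a + b + 1) (a + 1) mu \<longleftrightarrow>
    eigenvalue (N_mat a) mu \<and> eigenvalue (N_mat b) mu"
proof
  assume "unreachable_eigenvalue (a + b + 1) (a + 1) mu"
  then obtain v where v: "v \<in> carrier_vec (a + b + 1)" "v \<noteq> 0\<^sub>v (a + b + 1)"
    "path_laplacian (a + b + 1) *\<^sub>v v = mu \<cdot>\<^sub>v v" "v $ a = 0"
    unfolding unreachable_eigenvalue_def by auto
  define u where "u = vec a (\<lambda>r. v $ r)"
  define w where "w = vec b (\<lambda>t. v $ (a + b - t))"
  have uw: "u \<in> carrier_vec a" "w \<in> carrier_vec b"
    unfolding u_def w_def by simp_all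
  have v_join: "v = path_join u w"
    unfolding u_def w_def using path_join_split[OF v(1,4)] .
  have eigen: "N_mat a *\<^sub>v u = mu \<cdot>\<^sub>v u" "N_mat b *\<^sub>v w = mu \<cdot>\<^sub>v w" "u $ (a - 1) + w $ (b - 1) = 0"
    using v(3) path_join_eigen_iff[OF uw assms] unfolding v_join by auto
  have "u = 0\<^sub>v a \<longleftrightarrow> w = 0\<^sub>v b"
    using N_mat_eigen_zero_iff_last[OF uw(1) \<open>0 < a\<close> eigen(1)]
      N_mat_eigen_zero_iff_last[OF uw(2) \<open>0 < b\<close> eigen(2)] eigen(3) by auto
  moreover have "\<not> (u = 0\<^sub>v a \<and> w = 0\<^sub>v b)"
    using v(2) unfolding v_join by (auto simp: path_join_def)
  ultimately show "eigenvalue (N_mat a) mu \<and> eigenvalue (N_mat b) mu"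
    unfolding eigenvalue_def eigenvector_def using uw eigen by auto
next
  assume "eigenvalue (N_mat a) mu \<and> eigenvalue (N_mat b) mu"
  then obtain u w where u: "u \<in> carrier_vec a" "u \<noteq> 0\<^sub>v a" "N_mat a *\<^sub>v u = mu \<cdot>\<^sub>v u"
    and w: "w \<in> carrier_vec b" "w \<noteq> 0\<^sub>v b" "N_mat b *\<^sub>v w = mu \<cdot>\<^sub>v w"
    unfolding eigenvalue_def eigenvector_def by auto
  have u_last: "u $ (a - 1) \<noteq> 0" and w_last: "w $ (b - 1) \<noteq> 0"
    using N_mat_eigen_zero_iff_last[OF u(1) \<open>0 < a\<close> u(3)] u(2)
      N_mat_eigen_zero_iff_last[OF w(1) \<open>0 < b\<close> w(3)] w(2) by auto
  define c where "c = - u $ (a - 1) / w $ (b - 1)"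
  define w' where "w' = c \<cdot>\<^sub>v w"
  have "N_mat b *\<^sub>v w' = c \<cdot>\<^sub>v (mu \<cdot>\<^sub>v w)"
    unfolding w'_def using mult_mat_vec[of "N_mat b" b b w c] w(1,3) by simp
  then have w': "w' \<in> carrier_vec b" "N_mat b *\<^sub>v w' = mu \<cdot>\<^sub>v w'" "u $ (a - 1) + w' $ (b - 1) = 0"
    using w(1) w_last \<open>0 < b\<close> unfolding w'_def c_def by (auto simp: smult_smult_assoc mult.commute)
  define v where "v = path_join u w'"
  have "path_laplacian (a + b + 1) *\<^sub>v v = mu \<cdot>\<^sub>v v"
    unfolding v_def using path_join_eigen_iff[OF u(1) w'(1) assms] u(3) w' by simp
  moreover have "v \<in> carrier_vec (a + b + 1)" "v $ a = 0" "v $ (a - 1) \<noteq> 0"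
    using u(1) w'(1) u_last \<open>0 < a\<close> unfolding v_def path_join_def by auto
  moreover from this(3) have "v \<noteq> 0\<^sub>v (a + b + 1)"
    by auto
  ultimately show "unreachable_eigenvalue (a + b + 1) (a + 1) mu"
    unfolding unreachable_eigenvalue_def by auto
qed

section \<open>Spectrum of the path Laplacian\<close>

definition path_eigenvalue :: "nat \<Rightarrow> nat \<Rightarrow> real" where
  "path_eigenvalue n j = 2 - 2 * cos (real j * pi / real n)"

definition path_eigenvector :: "nat \<Rightarrow> nat \<Rightarrow> real vec" where
  "path_eigenvector n j = vec n (\<lambda>r. cos (real j * pi / real n * (real r + 1 / 2)))"

lemma path_eigenvector_carrier: "path_eigenvector n j \<in> carrier_vec n"
  unfolding path_eigenvector_def by simp

lemma cos_three_term_recurrence: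
  fixes t x :: real
  shows "cos (t * (x - 1 + 1 / 2)) + cos (t * (x + 1 + 1 / 2)) = 2 * cos t * cos (t * (x + 1 / 2))"
proof -
  have "t * (x - 1 + 1 / 2) = t * (x + 1 / 2) - t" "t * (x + 1 + 1 / 2) = t * (x + 1 / 2) + t"
    by (simp_all add: algebra_simps)
  then show ?thesis
    by (simp add: cos_add cos_diff)
qed

text \<open>The sampled cosine satisfies the interior recurrence, and its reflection symmetries about
  \<open>-1/2\<close> and \<open>n - 1/2\<close> produce exactly the boundary rows (diagonal entry 1) of the Laplacian.\<close>
lemma path_eigenvector_eigen:
  assumes "2 \<le> n" "j < n"
  shows "path_laplacian n *\<^sub>v path_eigenvector n j = path_eigenvalue n j \<cdot>\<^sub>v path_eigenvector n j"
proof -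
  define t where "t = real j * pi / real n"
  define F where "F x = cos (t * (x + 1 / 2))" for x :: real
  have nth: "path_eigenvector n j $ r = F (real r)" if "r < n" for r
    using that unfolding path_eigenvector_def F_def t_def by simp
  have rec: "F (x - 1) + F (x + 1) = 2 * cos t * F x" for x
    unfolding F_def by (rule cos_three_term_recurrence)
  have first: "F (- 1) = F 0"
  proof -
    have "t * (- 1 + 1 / 2) = - (t * (0 + 1 / 2))"
      by simp
    then show ?thesis
      unfolding F_def by (metis cos_minus)
  qed
  have last: "F (real n) = F (real n - 1)"
  proof -
    have "t * (real n + 1 / 2) = real j * pi + t / 2" "t * (real n - 1 + 1 / 2) = real j * pi - t / 2"
      using assms unfolding t_def by (simp_all add: field_simps)
    then show ?thesis
      unfolding F_def by (simp add: cos_add cos_diff)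
  qed
  have lam: "path_eigenvalue n j * F x = 2 * F x - 2 * cos t * F x" for x
    unfolding path_eigenvalue_def t_def by (simp add: algebra_simps)
  have row: "(if r = 0 \<or> r = n - 1 then 1 else 2) * F (real r) - (if 0 < r then F (real r - 1) else 0)
      - (if r + 1 < n then F (real r + 1) else 0) = path_eigenvalue n j * F (real r)" if r: "r < n" for r
  proof -
    consider "r = 0" | "0 < r" "r + 1 = n" | "0 < r" "r + 1 < n"
      using r by linarith
    then show ?thesis
    proof cases
      case 1
      then show ?thesis using rec[of 0] first lam assms by simp
    next
      case 2
      then have "real r + 1 = real n" "r = n - 1"
        by simp_all
      then show ?thesis using rec[of "real r"] last lam 2 by simp
    next
      case 3
      then have "r \<noteq> n - 1"
        by simp
      then show ?thesis using rec[of "real r"] lam 3 by simp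
    qed
  qed
  have "path_eigenvector n j $ (r - 1) = F (real r - 1)" if "0 < r" "r < n" for r
    using that nth[of "r - 1"] by (simp add: of_nat_diff)
  moreover have "path_eigenvector n j $ (r + 1) = F (real r + 1)" if "r + 1 < n" for r
    using that nth[of "r + 1"] by (simp add: add.commute)
  ultimately show ?thesis
    unfolding path_laplacian_tridiag tridiag_eigen_iff[OF path_eigenvector_carrier]
    using row nth by (simp cong: if_cong)
qed

lemma path_eigenvector_nonzero:
  assumes "j < n"
  shows "path_eigenvector n j \<noteq> 0\<^sub>v n"
proof -
  define x where "x = real j * pi / real n"
  have "0 \<le> x" "x < pi"
    using assms unfolding x_def by (simp_all add: divide_less_eq)
  then have "cos (x / 2) > 0"
    by (intro cos_gt_zero_pi) auto
  then have "path_eigenvector n j $ 0 \<noteq> 0"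
    using assms unfolding path_eigenvector_def x_def by (simp add: mult.commute)
  then show ?thesis
    using assms by (metis index_zero_vec(1) zero_less_iff_neq_zero gr_implies_not0)
qed

lemma inj_on_path_eigenvalue: "inj_on (path_eigenvalue n) {..<n}"
proof (rule inj_onI)
  fix j k assume "j \<in> {..<n}" "k \<in> {..<n}" and eq: "path_eigenvalue n j = path_eigenvalue n k"
  then have "0 \<le> real m * pi / real n \<and> real m * pi / real n \<le> pi" if "m \<in> {j, k}" for m
    using that by (auto simp: divide_le_eq)
  moreover have "cos (real j * pi / real n) = cos (real k * pi / real n)"
    using eq unfolding path_eigenvalue_def by simp
  ultimately have "real j * pi / real n = real k * pi / real n"
    using cos_inj_pi by blast
  then show "j = k"
    using \<open>j \<in> {..<n}\<close> by auto
qed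

section \<open>Kalman matrices of symmetric matrices\<close>

lemma pow_mat_commute:
  assumes "A \<in> carrier_mat n n"
  shows "A * A ^\<^sub>m k = A ^\<^sub>m k * A"
proof (induction k)
  case 0
  then show ?case using assms by simp
next
  case (Suc k)
  have "A * A ^\<^sub>m Suc k = (A * A ^\<^sub>m k) * A"
    using assms by (simp add: assoc_mult_mat[of A n n _ n A n])
  then show ?case using Suc.IH by simp
qed

lemma transpose_pow_mat_symmetric:
  fixes A :: "'a :: comm_semiring_1 mat"
  assumes "A \<in> carrier_mat n n" "transpose_mat A = A"
  shows "transpose_mat (A ^\<^sub>m k) = A ^\<^sub>m k"
proof (induction k)
  case 0
  then show ?case using assms by simp
next
  case (Suc k)
  have "transpose_mat (A ^\<^sub>m Suc k) = transpose_mat A * transpose_mat (A ^\<^sub>m k)"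
    using assms transpose_mult[of "A ^\<^sub>m k" n n A n] by simp
  then show ?case using Suc.IH assms pow_mat_commute[OF assms(1)] by simp
qed

lemma pow_mat_mult_eigenvector:
  fixes A :: "'a :: field mat"
  assumes A: "A \<in> carrier_mat n n" and v: "v \<in> carrier_vec n" and ev: "A *\<^sub>v v = mu \<cdot>\<^sub>v v"
  shows "A ^\<^sub>m k *\<^sub>v v = mu ^ k \<cdot>\<^sub>v v"
proof (induction k)
  case 0
  then show ?case using A v by simp
next
  case (Suc k)
  have "A ^\<^sub>m Suc k *\<^sub>v v = A ^\<^sub>m k *\<^sub>v (mu \<cdot>\<^sub>v v)"
    using A v ev assoc_mult_mat_vec[of "A ^\<^sub>m k" n n A n v] by simp
  also have "\<dots> = mu ^ Suc k \<cdot>\<^sub>v v"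
    using A v Suc.IH mult_mat_vec[of "A ^\<^sub>m k" n n v mu] by (simp add: smult_smult_assoc)
  finally show ?case .
qed

lemma reach_matrix_carrier: "A \<in> carrier_mat n n \<Longrightarrow> reach_matrix A b \<in> carrier_mat n n"
  unfolding reach_matrix_def by auto

lemma reachable_iff_det_reach_matrix:
  "A \<in> carrier_mat n n \<Longrightarrow> reachable A b \<longleftrightarrow> det (reach_matrix A b) \<noteq> 0"
  using vec_space.det_rank_iff[OF reach_matrix_carrier] unfolding reachable_def by auto

lemma obs_matrix_symmetric:
  assumes "A \<in> carrier_mat n n" "transpose_mat A = A"
  shows "obs_matrix A c = transpose_mat (reach_matrix A c)"
  using assms transpose_pow_mat_symmetric[OF assms]
  unfolding obs_matrix_def reach_matrix_def by (intro eq_matI) auto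

lemma observable_iff_reachable_symmetric:
  assumes "A \<in> carrier_mat n n" "transpose_mat A = A"
  shows "observable A c \<longleftrightarrow> reachable A c"
proof -
  have K: "reach_matrix A c \<in> carrier_mat n n"
    using assms(1) by (rule reach_matrix_carrier)
  then have "observable A c \<longleftrightarrow> det (transpose_mat (reach_matrix A c)) \<noteq> 0"
    using vec_space.det_rank_iff[of "transpose_mat (reach_matrix A c)" n] assms
    unfolding observable_def obs_matrix_symmetric[OF assms] by auto
  then show ?thesis
    using reachable_iff_det_reach_matrix[OF assms(1)] det_transpose[OF K] by simp
qed

lemma transpose_reach_matrix_mult_eigenvector:
  fixes A :: "'a :: field mat"
  assumes A: "A \<in> carrier_mat n n" "transpose_mat A = A" and b: "b \<in> carrier_vec n"
    and v: "v \<in> carrier_vec n" and ev: "A *\<^sub>v v = mu \<cdot>\<^sub>v v"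
  shows "transpose_mat (reach_matrix A b) *\<^sub>v v = vec n (\<lambda>k. mu ^ k * (b \<bullet> v))"
proof (rule eq_vecI)
  fix k assume "k < dim_vec (vec n (\<lambda>k. mu ^ k * (b \<bullet> v)))"
  then have k: "k < n" by simp
  have "(transpose_mat (reach_matrix A b) *\<^sub>v v) $ k = (A ^\<^sub>m k *\<^sub>v b) \<bullet> v"
    using A k b v unfolding reach_matrix_def by (simp add: scalar_prod_def)
  also have "\<dots> = (transpose_mat (A ^\<^sub>m k) *\<^sub>v v) \<bullet> b"
    using A b v transpose_vec_mult_scalar[of "A ^\<^sub>m k" n n b v]
      comm_scalar_prod[OF mult_mat_vec_carrier[OF pow_carrier_mat[OF A(1)] b] v] by simp
  also have "\<dots> = mu ^ k * (b \<bullet> v)"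
    using A b v comm_scalar_prod[of b n v]
    by (simp add: transpose_pow_mat_symmetric pow_mat_mult_eigenvector[OF A(1) v ev])
  finally show "(transpose_mat (reach_matrix A b) *\<^sub>v v) $ k = vec n (\<lambda>k. mu ^ k * (b \<bullet> v)) $ k"
    using k by simp
qed (use A in \<open>simp add: reach_matrix_def\<close>)

lemma det_reach_matrix_eq_0_if_orthogonal_eigenvector:
  fixes A :: "'a :: field mat"
  assumes A: "A \<in> carrier_mat n n" "transpose_mat A = A" and b: "b \<in> carrier_vec n"
    and v: "v \<in> carrier_vec n" "v \<noteq> 0\<^sub>v n" "A *\<^sub>v v = mu \<cdot>\<^sub>v v" and orth: "b \<bullet> v = 0"
  shows "det (reach_matrix A b) = 0"
proof -
  have K: "transpose_mat (reach_matrix A b) \<in> carrier_mat n n"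
    using reach_matrix_carrier[OF A(1)] by simp
  have "transpose_mat (reach_matrix A b) *\<^sub>v v = 0\<^sub>v n"
    unfolding transpose_reach_matrix_mult_eigenvector[OF A b v(1,3)] orth by auto
  then have "det (transpose_mat (reach_matrix A b)) = 0"
    using det_0_iff_vec_prod_zero_field[OF K] v(1,2) by auto
  then show ?thesis
    using det_transpose[OF reach_matrix_carrier[OF A(1)]] by simp
qed

text \<open>A kernel vector \<open>c\<close> of the Kalman matrix gives the polynomial \<open>p = \<Sum>\<^sub>k c\<^sub>k x\<^sup>k\<close> with
  \<open>(b \<bullet> v\<^sub>j) p(\<lambda>\<^sub>j) = 0\<close> for every eigenpair; with \<open>n\<close> distinct eigenvalues and \<open>deg p < n\<close>,
  some \<open>b \<bullet> v\<^sub>j\<close> must vanish.\<close>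
lemma orthogonal_eigenvector_if_det_reach_matrix_eq_0:
  fixes A :: "'a :: field mat"
  assumes A: "A \<in> carrier_mat n n" "transpose_mat A = A" and b: "b \<in> carrier_vec n"
    and eigen: "\<And>j. j < n \<Longrightarrow> ev j \<in> carrier_vec n \<and> ev j \<noteq> 0\<^sub>v n \<and> A *\<^sub>v ev j = lam j \<cdot>\<^sub>v ev j"
    and distinct: "inj_on lam {..<n}"
    and det: "det (reach_matrix A b) = 0"
  shows "\<exists>j<n. b \<bullet> ev j = 0"
proof (rule ccontr)
  assume nonorth: "\<not> (\<exists>j<n. b \<bullet> ev j = 0)"
  have K: "reach_matrix A b \<in> carrier_mat n n"
    using A(1) by (rule reach_matrix_carrier)
  obtain c where c: "c \<in> carrier_vec n" "c \<noteq> 0\<^sub>v n" "reach_matrix A b *\<^sub>v c = 0\<^sub>v n"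
    using det det_0_iff_vec_prod_zero_field[OF K] by auto
  define p where "p = (\<Sum>k<n. monom (c $ k) k)"
  have poly_p: "vec n (\<lambda>k. x ^ k * \<beta>) \<bullet> c = \<beta> * poly p x" for x \<beta>
    using c(1) by (simp add: p_def poly_sum poly_monom scalar_prod_def sum_distrib_left lessThan_atLeast0 ac_simps)
  have root: "poly p (lam j) = 0" if j: "j < n" for j
  proof -
    have "0 = ev j \<bullet> (reach_matrix A b *\<^sub>v c)"
      using c(3) eigen[OF j] by simp
    also have "\<dots> = (transpose_mat (reach_matrix A b) *\<^sub>v ev j) \<bullet> c"
      using transpose_vec_mult_scalar[OF K c(1)] eigen[OF j] by simp
    also have "\<dots> = vec n (\<lambda>k. lam j ^ k * (b \<bullet> ev j)) \<bullet> c"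
      using transpose_reach_matrix_mult_eigenvector[OF A b] eigen[OF j] by simp
    also have "\<dots> = (b \<bullet> ev j) * poly p (lam j)"
      by (rule poly_p)
    finally show ?thesis
      using nonorth j by auto
  qed
  have "0 < n"
    using c(1,2) by (cases n) auto
  moreover have "degree p \<le> n - 1"
    unfolding p_def by (rule degree_sum_le) (auto intro: order.trans[OF degree_monom_le])
  ultimately have "degree p < n"
    by linarith
  moreover have "card (lam ` {..<n}) = n"
    using distinct by (simp add: card_image)
  ultimately have "p = 0"
    using root by (intro poly_eqI_degree[of "lam ` {..<n}"]) auto
  moreover have "coeff p k = c $ k" if "k < n" for k
    unfolding p_def using that by (simp add: coeff_sum coeff_monom)
  ultimately have "c = 0\<^sub>v n"
    using c(1) by (intro eq_vecI) auto
  with c(2) show False ..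
qed

lemma reachable_path_laplacian_iff:
  assumes "2 \<le> n" "1 \<le> i" "i \<le> n"
  shows "reachable (path_laplacian n) (unit_vec n (i - 1)) \<longleftrightarrow> \<not> (\<exists>mu. unreachable_eigenvalue n i mu)"
proof -
  let ?L = "path_laplacian n" and ?e = "unit_vec n (i - 1) :: real vec"
  have L: "?L \<in> carrier_mat n n" "transpose_mat ?L = ?L"
    by (simp_all add: path_laplacian_carrier transpose_path_laplacian)
  have e: "?e \<in> carrier_vec n"
    by simp
  have e_scalar: "?e \<bullet> v = v $ (i - 1)" if "v \<in> carrier_vec n" for v
    using assms that by simp
  have "det (reach_matrix ?L ?e) = 0 \<longleftrightarrow> (\<exists>mu. unreachable_eigenvalue n i mu)"
  proof
    assume det: "det (reach_matrix ?L ?e) = 0"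
    have eigen: "path_eigenvector n j \<in> carrier_vec n \<and> path_eigenvector n j \<noteq> 0\<^sub>v n \<and>
        ?L *\<^sub>v path_eigenvector n j = path_eigenvalue n j \<cdot>\<^sub>v path_eigenvector n j" if "j < n" for j
      using path_eigenvector_carrier path_eigenvector_nonzero[OF that] path_eigenvector_eigen[OF assms(1) that]
      by blast
    obtain j where "j < n" "?e \<bullet> path_eigenvector n j = 0"
      using orthogonal_eigenvector_if_det_reach_matrix_eq_0[OF L e eigen inj_on_path_eigenvalue det] by blast
    then have "unreachable_eigenvalue n i (path_eigenvalue n j)"
      unfolding unreachable_eigenvalue_def using eigen[of j] e_scalar[OF path_eigenvector_carrier] by auto
    then show "\<exists>mu. unreachable_eigenvalue n i mu" ..
  next
    assume "\<exists>mu. unreachable_eigenvalue n i mu"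
    then obtain mu v where "v \<in> carrier_vec n" "v \<noteq> 0\<^sub>v n" "?L *\<^sub>v v = mu \<cdot>\<^sub>v v" "v $ (i - 1) = 0"
      unfolding unreachable_eigenvalue_def by blast
    then show "det (reach_matrix ?L ?e) = 0"
      using det_reach_matrix_eq_0_if_orthogonal_eigenvector[OF L e] e_scalar by metis
  qed
  then show ?thesis
    using reachable_iff_det_reach_matrix[OF L(1)] by simp
qed

theorem mainTheorem6:
  fixes n i :: nat
  assumes "n \<ge> 3" and "2 \<le> i" and "i \<le> n - 1"
  shows "(reachable (path_laplacian n) (unit_vec n (i - 1)) \<longleftrightarrow>
            \<not> (\<exists>mu. eigenvalue (N_mat (i - 1)) mu \<and> eigenvalue (N_mat (n - i)) mu))
       \<and> (observable (path_laplacian n) (unit_vec n (i - 1)) \<longleftrightarrow>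
            \<not> (\<exists>mu. eigenvalue (N_mat (i - 1)) mu \<and> eigenvalue (N_mat (n - i)) mu))
       \<and> (\<forall>mu. (eigenvalue (N_mat (i - 1)) mu \<and> eigenvalue (N_mat (n - i)) mu)
               \<longleftrightarrow> unreachable_eigenvalue n i mu)"
proof -
  have split: "n = (i - 1) + (n - i) + 1" "i = (i - 1) + 1" "0 < i - 1" "0 < n - i"
    using assms by auto
  have common: "eigenvalue (N_mat (i - 1)) mu \<and> eigenvalue (N_mat (n - i)) mu
      \<longleftrightarrow> unreachable_eigenvalue n i mu" for mu
    using unreachable_eigenvalue_iff_common_eigenvalue[OF split(3,4)] split(1,2) by simp
  have reachable: "reachable (path_laplacian n) (unit_vec n (i - 1)) \<longleftrightarrow> \<not> (\<exists>mu. unreachable_eigenvalue n i mu)"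
    using assms by (intro reachable_path_laplacian_iff) auto
  have "observable (path_laplacian n) (unit_vec n (i - 1)) \<longleftrightarrow> reachable (path_laplacian n) (unit_vec n (i - 1))"
    by (rule observable_iff_reachable_symmetric[OF path_laplacian_carrier transpose_path_laplacian])
  then show ?thesis
    using common reachable by auto
qed

end
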